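(* Fix $\gamma \ge 1$, $\beta \in (0,1)$ and $r > 0$ with $r < \beta$. Let $\Psi$ be a continuous survival function that is asymptotically generalized Gaussian on the right with exponent $\gamma$. For each $n$, let $m = \lfloor n^{1-\beta} \rfloor$ and $\mu = (\gamma r \log n)^{1/\gamma}$, and draw a subset $\mathscr{F} \subset [n]$ of size $m$ uniformly at random. Set $\mu_i = \mu$ for $i \in \mathscr{F}$ and $\mu_i = 0$ otherwise. Let $X_1,\dots,X_n$ be independent with $X_i$ having survival function $\Psi(\cdot - \mu_i)$. Then the oracle risk satisfies $$\liminf_{n\to\infty} \mathbb{E}\Big[\min_{t \in \mathbb{R}} \big(\mathrm{FDP}(\mathscr{R}_t) + \mathrm{FNP}(\mathscr{R}_t)\big)\Big] \ge 1.$$ Here the oracle threshold $\tau_o$ is any minimizer of $t \mapsto \mathrm{FDP}(\mathscr{R}_t)+\mathrm{FNP}(\mathscr{R}_t)$ over $t \in \mathbb{R}$, and the oracle risk is $\mathbb{E}[\mathrm{FDP}(\mathscr{R}_{\tau_o})+\mathrm{FNP}(\mathscr{R}_{\tau_o})]$.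
   Context: The survival function of a random variable $Y$ is $y \mapsto \mathbb{P}(Y \ge y)$. A survival function $\Psi$ is asymptotically generalized Gaussian (AGG) on the right with exponent $\gamma>0$ if $\lim_{x\to\infty} x^{-\gamma}\log\Psi(x) = -1/\gamma$. The $i$-th null hypothesis is $\mu_i = 0$, and $\mathscr{F}$ is the set of false nulls. For a set $\mathscr{R} \subset [n]=\{1,\dots,n\}$ of rejected hypotheses: - $\mathrm{FDP}(\mathscr{R}) = |\mathscr{R}\setminus\mathscr{F}|/|\mathscr{R}|$, - $\mathrm{FNP}(\mathscr{R}) = |\mathscr{F}\setminus\mathscr{R}|/|\mathscr{F}|$, with the convention $0/0=0$. For $t \in \mathbb{R}$, $\mathscr{R}_t = \{i : X_i \ge t\}$. *)

theory Defs
  imports "HOL-Probability.Probability"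
begin

definition survival_of :: "real measure \<Rightarrow> real \<Rightarrow> real" where
  "survival_of D y = measure D {y..}"

definition AGG_right :: "(real \<Rightarrow> real) \<Rightarrow> real \<Rightarrow> bool" where
  "AGG_right \<Psi> \<gamma> \<longleftrightarrow> \<gamma> > 0 \<and>
     ((\<lambda>x. x powr (-\<gamma>) * ln (\<Psi> x)) \<longlongrightarrow> - 1 / \<gamma>) at_top"

text \<open>FDP and FNP (division by zero yields 0, matching the convention 0/0 = 0).\<close>
definition FDP :: "nat set \<Rightarrow> nat set \<Rightarrow> real" where
  "FDP F R = real (card (R - F)) / real (card R)"

definition FNP :: "nat set \<Rightarrow> nat set \<Rightarrow> real" where
  "FNP F R = real (card (F - R)) / real (card F)"

definition rej :: "nat \<Rightarrow> (nat \<Rightarrow> real) \<Rightarrow> real \<Rightarrow> nat set" where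
  "rej n X t = {i \<in> {1..n}. t \<le> X i}"

text \<open>Oracle loss: min over t of FDP(R_t) + FNP(R_t) (the minimum is attained, so it equals the infimum).\<close>
definition oracle_loss :: "nat \<Rightarrow> nat set \<Rightarrow> (nat \<Rightarrow> real) \<Rightarrow> real" where
  "oracle_loss n F X = (INF t. FDP F (rej n X t) + FNP F (rej n X t))"

text \<open>Oracle risk at sample size n: F uniform among the m-subsets of [n], and given F,
  X_1..X_n independent with X_i = Z_i + mu_i, Z_i ~ D (so X_i has survival function Psi(. - mu_i)).\<close>
definition oracle_risk :: "real measure \<Rightarrow> real \<Rightarrow> real \<Rightarrow> real \<Rightarrow> nat \<Rightarrow> real" where
  "oracle_risk D \<gamma> \<beta> r n =
    (let m = nat \<lfloor>real n powr (1 - \<beta>)\<rfloor>;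
         \<mu> = (\<gamma> * r * ln (real n)) powr (1 / \<gamma>);
         S = {F. F \<subseteq> {1..n} \<and> card F = m}
     in (\<Sum>F\<in>S. \<integral>X. oracle_loss n F X
            \<partial>(PiM {1..n} (\<lambda>i. distr D borel (\<lambda>z. z + (if i \<in> F then \<mu> else 0)))))
        / real (card S))"

end

theory Submission
  imports Defs "HOL-Real_Asymp.Real_Asymp"
begin

(*
  Fix \<epsilon> > 0, choose c with P(Z \<ge> c) \<le> \<epsilon>^2 and consider the level s = \<mu> + c. By Markov's
  inequality at most \<epsilon> m of the m signals exceed s, except with probability \<epsilon>. The AGG lower
  tail gives \<Psi>(\<mu> + c) \<ge> n^(-\<rho>) for some \<rho> < \<beta>, so the expected number (n - m) \<Psi>(\<mu> + c)
  of nulls above s is of order n^(1 - \<rho>), much larger than m / \<epsilon> \<approx> n^(1 - \<beta>) / \<epsilon>; by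
  Chebyshev's inequality at least (1 - \<epsilon>) m / \<epsilon> of them exceed s, except with probability
  O(\<epsilon>). Outside these two events every threshold either misses (1 - \<epsilon>) m signals, so
  FNP \<ge> 1 - \<epsilon>, or lies below s and rejects all those nulls, so FDP \<ge> 1 - \<epsilon>. Hence the oracle
  risk is eventually at least (1 - \<epsilon>)(1 - 2\<epsilon>).
*)

section \<open>Counting coordinates of an independent product\<close>

lemma integral_PiM_prod_subset:
  fixes M :: "'i \<Rightarrow> 'a measure" and f :: "'i \<Rightarrow> 'a \<Rightarrow> real"
  assumes prob: "\<And>i. prob_space (M i)" and "finite I" "J \<subseteq> I"
    and int: "\<And>j. j \<in> J \<Longrightarrow> integrable (M j) (f j)"
  shows "(\<integral>x. (\<Prod>j\<in>J. f j (x j)) \<partial>PiM I M) = (\<Prod>j\<in>J. integral\<^sup>L (M j) (f j))"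
proof -
  interpret product_prob_space M I
    using prob by (rule product_prob_spaceI)
  define g where "g j = (if j \<in> J then f j else (\<lambda>_. 1))" for j
  have "(\<Prod>j\<in>J. f j (x j)) = (\<Prod>i\<in>I. g i (x i))" for x
    using assms(2,3) by (intro prod.mono_neutral_cong_left) (auto simp: g_def)
  then have "(\<integral>x. (\<Prod>j\<in>J. f j (x j)) \<partial>PiM I M) = (\<integral>x. (\<Prod>i\<in>I. g i (x i)) \<partial>PiM I M)"
    by simp
  also have "\<dots> = (\<Prod>i\<in>I. integral\<^sup>L (M i) (g i))"
    using assms(2) int by (intro product_integral_prod) (auto simp: g_def)
  also have "\<dots> = (\<Prod>j\<in>J. integral\<^sup>L (M j) (f j))"
    using assms(2,3) by (intro prod.mono_neutral_cong_right) (auto simp: g_def M.prob_space)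
  finally show ?thesis .
qed

context
  fixes M :: "'i \<Rightarrow> 'a measure" and I J :: "'i set" and A :: "'a set"
  assumes prob: "\<And>i. prob_space (M i)" and fin: "finite I" and sub: "J \<subseteq> I"
    and sets_A: "\<And>i. A \<in> sets (M i)"
begin

private lemma integrable_indicator: "integrable (M i) (indicator A :: 'a \<Rightarrow> real)"
proof -
  interpret prob_space "M i"
    by (rule prob)
  show ?thesis
    using sets_A by (simp add: emeasure_finite less_top[symmetric])
qed

private lemma integrable_indicator_component:
  assumes "k \<in> I"
  shows "integrable (PiM I M) (\<lambda>x. indicator A (x k) :: real)"
proof -
  interpret product_prob_space M I
    using prob by (rule product_prob_spaceI)
  have [measurable]: "A \<in> sets (M k)"
    using sets_A by auto
  show ?thesis
    using assms by (intro P.integrable_const_bound[where B=1]) (auto simp: indicator_def)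
qed

private lemma integrable_indicator_components:
  assumes "k \<in> I" "l \<in> I"
  shows "integrable (PiM I M) (\<lambda>x. indicator A (x k) * indicator A (x l) :: real)"
proof -
  interpret product_prob_space M I
    using prob by (rule product_prob_spaceI)
  have [measurable]: "A \<in> sets (M k)" "A \<in> sets (M l)"
    using sets_A by auto
  show ?thesis
    using assms by (intro P.integrable_const_bound[where B=1]) (auto simp: indicator_def)
qed

lemma integrable_PiM_count: "integrable (PiM I M) (\<lambda>x. \<Sum>j\<in>J. indicator A (x j) :: real)"
  using integrable_indicator_component sub by (intro Bochner_Integration.integrable_sum) auto

lemma integrable_PiM_count_centered_sq:
  "integrable (PiM I M) (\<lambda>x. ((\<Sum>j\<in>J. indicator A (x j)) - c)\<^sup>2 :: real)"
proof -
  interpret product_prob_space M I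
    using prob by (rule product_prob_spaceI)
  have "((\<Sum>j\<in>J. indicator A (x j)) - c)\<^sup>2 = (\<Sum>k\<in>J. \<Sum>l\<in>J. indicator A (x k) * indicator A (x l))
      + c * c - 2 * (\<Sum>j\<in>J. indicator A (x j)) * c" for x :: "'i \<Rightarrow> 'a"
    by (simp only: power2_diff) (simp only: power2_eq_square sum_product)
  then show ?thesis
    by (simp only:) (intro Bochner_Integration.integrable_diff Bochner_Integration.integrable_add
        Bochner_Integration.integrable_mult_left Bochner_Integration.integrable_mult_right
        integrable_PiM_count P.integrable_const Bochner_Integration.integrable_sum
        integrable_indicator_components; use sub in auto)
qed

lemma integral_PiM_count:
  "(\<integral>x. (\<Sum>j\<in>J. indicator A (x j)) \<partial>PiM I M) = (\<Sum>j\<in>J. measure (M j) A)"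
proof -
  have "(\<integral>x. indicator A (x j) \<partial>PiM I M) = measure (M j) A" if "j \<in> J" for j
    using integral_PiM_prod_subset[where M=M and I=I and J="{j}" and f="\<lambda>_. indicator A", OF prob fin]
      that sub integrable_indicator sets.sets_into_space[OF sets_A] by (auto simp: Int_absorb2)
  moreover have "integrable (PiM I M) (\<lambda>x. indicator A (x j) :: real)" if "j \<in> J" for j
    using integrable_indicator_component that sub by auto
  ultimately show ?thesis
    by (simp add: Bochner_Integration.integral_sum)
qed

lemma integral_PiM_count_variance_le:
  "(\<integral>x. ((\<Sum>j\<in>J. indicator A (x j)) - (\<Sum>j\<in>J. measure (M j) A))\<^sup>2 \<partial>PiM I M)
     \<le> (\<Sum>j\<in>J. measure (M j) A)"
proof -
  interpret product_prob_space M I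
    using prob by (rule product_prob_spaceI)
  define C where "C x = (\<Sum>j\<in>J. indicator A (x j) :: real)" for x
  define p where "p j = measure (M j) A" for j
  define E where "E = (\<Sum>j\<in>J. p j)"
  have finJ: "finite J"
    using fin sub by (rule finite_subset[rotated])
  have int_pair: "integrable (PiM I M) (\<lambda>x. indicator A (x k) * indicator A (x l) :: real)"
    if "k \<in> J" "l \<in> J" for k l
    using that sub by (intro integrable_indicator_components) auto
  have pair: "(\<integral>x. indicator A (x k) * indicator A (x l) \<partial>PiM I M) = (if k = l then p k else p k * p l)"
    if "k \<in> J" "l \<in> J" for k l
  proof (cases "k = l")
    case True
    then show ?thesis
      using integral_PiM_prod_subset[where M=M and I=I and J="{k}" and f="\<lambda>_. indicator A", OF prob fin]
        that sub integrable_indicator sets.sets_into_space[OF sets_A]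
      by (auto simp: p_def Int_absorb2 simp flip: indicator_inter_arith)
  next
    case False
    then show ?thesis
      using integral_PiM_prod_subset[where M=M and I=I and J="{k, l}" and f="\<lambda>_. indicator A", OF prob fin]
        that sub integrable_indicator sets.sets_into_space[OF sets_A] by (auto simp: p_def Int_absorb2)
  qed
  have C_sq: "(C x)\<^sup>2 = (\<Sum>k\<in>J. \<Sum>l\<in>J. indicator A (x k) * indicator A (x l))" for x
    by (simp add: C_def power2_eq_square sum_product)
  have int_C: "integrable (PiM I M) C"
    unfolding C_def by (rule integrable_PiM_count)
  have int_C_sq: "integrable (PiM I M) (\<lambda>x. (C x)\<^sup>2)"
    unfolding C_def using integrable_PiM_count_centered_sq[of 0] by simp
  have "(\<integral>x. (C x)\<^sup>2 \<partial>PiM I M) = (\<Sum>k\<in>J. \<Sum>l\<in>J. if k = l then p k else p k * p l)"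
    unfolding C_sq using int_pair pair by (simp add: Bochner_Integration.integral_sum Bochner_Integration.integrable_sum)
  also have "\<dots> \<le> (\<Sum>k\<in>J. \<Sum>l\<in>J. (if k = l then p k else 0) + p k * p l)"
    by (intro sum_mono) (auto simp: p_def)
  also have "\<dots> = E + E\<^sup>2"
    using finJ by (simp add: sum.distrib E_def power2_eq_square sum_product)
  finally have "(\<integral>x. (C x)\<^sup>2 \<partial>PiM I M) \<le> E + E\<^sup>2" .
  moreover have "(\<integral>x. C x \<partial>PiM I M) = E"
    using integral_PiM_count by (simp add: C_def E_def p_def)
  ultimately show ?thesis
    using P.variance_eq[OF int_C int_C_sq] by (simp add: C_def E_def p_def)
qed

end

section \<open>The oracle loss\<close>

lemma FDP_le_1: "FDP F R \<le> 1"
  unfolding FDP_def by (cases "finite R") (auto simp: divide_le_eq_1 card_mono)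

lemma FNP_le_1: "FNP F R \<le> 1"
  unfolding FNP_def by (cases "finite F") (auto simp: divide_le_eq_1 card_mono)

lemma oracle_loss_nonneg: "0 \<le> oracle_loss n F X"
  unfolding oracle_loss_def FDP_def FNP_def by (rule cINF_greatest) auto

lemma oracle_loss_le_2: "oracle_loss n F X \<le> 2"
proof -
  have "oracle_loss n F X \<le> FDP F (rej n X 0) + FNP F (rej n X 0)"
    unfolding oracle_loss_def FDP_def FNP_def by (rule cINF_lower) (auto intro: bdd_belowI[of _ 0])
  also have "\<dots> \<le> 2"
    using FDP_le_1[of F "rej n X 0"] FNP_le_1[of F "rej n X 0"] by linarith
  finally show ?thesis .
qed

text \<open>Only the finitely many values \<open>X i\<close> matter, so rational thresholds realise every rejection set.\<close>

lemma rej_eq_rej_Rats: "\<exists>q\<in>\<rat>. rej n X q = rej n X t"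
proof -
  define a where "a = Max (insert (t - 1) {X i | i. i \<in> {1..n} \<and> X i < t})"
  have "a < t"
    unfolding a_def by (subst Max_less_iff) auto
  then obtain q where q: "q \<in> \<rat>" "a < q" "q < t"
    using Rats_dense_in_real by blast
  have "q \<le> X i \<longleftrightarrow> t \<le> X i" if "i \<in> {1..n}" for i
  proof
    assume "q \<le> X i"
    show "t \<le> X i"
    proof (rule ccontr)
      assume "\<not> t \<le> X i"
      then have "X i \<le> a"
        unfolding a_def using that by (intro Max_ge) auto
      with q \<open>q \<le> X i\<close> show False by simp
    qed
  qed (use q in simp)
  then show ?thesis
    using q(1) unfolding rej_def by blast
qed

lemma oracle_loss_eq_INF_Rats:
  "oracle_loss n F X = (INF t\<in>\<rat>. FDP F (rej n X t) + FNP F (rej n X t))"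
proof -
  define g where "g t = FDP F (rej n X t) + FNP F (rej n X t)" for t
  have "range g \<subseteq> g ` \<rat>"
  proof
    fix y assume "y \<in> range g"
    then obtain t where "y = g t" by blast
    moreover obtain q where "q \<in> \<rat>" "rej n X q = rej n X t"
      using rej_eq_rej_Rats by blast
    ultimately have "y = g q"
      by (simp add: g_def)
    with \<open>q \<in> \<rat>\<close> show "y \<in> g ` \<rat>"
      by blast
  qed
  then have "range g = g ` \<rat>" by blast
  then show ?thesis
    unfolding oracle_loss_def g_def by metis
qed

lemma FDP_plus_FNP_rej_eq_sums:
  assumes F: "F \<subseteq> {1..n}"
  shows "FDP F (rej n X t) + FNP F (rej n X t) =
    (\<Sum>i\<in>{1..n} - F. if t \<le> X i then 1 else 0) / (\<Sum>i\<in>{1..n}. if t \<le> X i then 1 else 0)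
    + (\<Sum>i\<in>F. if X i < t then 1 else 0) / real (card F)"
proof -
  have card_eq: "real (card {i\<in>A. P i}) = (\<Sum>i\<in>A. if P i then 1 else 0)" if "finite A" for A P
    using that by (simp add: sum.If_cases Int_def)
  have "rej n X t - F = {i\<in>{1..n} - F. t \<le> X i}"
    unfolding rej_def by auto
  then have FDP_num: "real (card (rej n X t - F)) = (\<Sum>i\<in>{1..n} - F. if t \<le> X i then 1 else 0)"
    using card_eq[of "{1..n} - F" "\<lambda>i. t \<le> X i"] by simp
  have "rej n X t = {i\<in>{1..n}. t \<le> X i}"
    unfolding rej_def by auto
  then have FDP_den: "real (card (rej n X t)) = (\<Sum>i\<in>{1..n}. if t \<le> X i then 1 else 0)"
    using card_eq[of "{1..n}" "\<lambda>i. t \<le> X i"] by simp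
  have "F - rej n X t = {i\<in>F. X i < t}"
    unfolding rej_def using F by auto
  then have FNP_num: "real (card (F - rej n X t)) = (\<Sum>i\<in>F. if X i < t then 1 else 0)"
    using card_eq[of F "\<lambda>i. X i < t"] finite_subset[OF F] by simp
  show ?thesis
    unfolding FDP_def FNP_def FDP_num FDP_den FNP_num ..
qed

lemma borel_measurable_oracle_loss:
  fixes M :: "nat \<Rightarrow> real measure"
  assumes sets_M: "\<And>i. sets (M i) = sets borel" and F: "F \<subseteq> {1..n}"
  shows "oracle_loss n F \<in> borel_measurable (PiM {1..n} M)"
proof -
  have component: "(\<lambda>X. X i) \<in> borel_measurable (PiM {1..n} M)" if "i \<in> {1..n}" for i
    using measurable_component_singleton[OF that, of M] measurable_cong_sets[OF refl sets_M] by blast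
  have count: "(\<lambda>X. \<Sum>i\<in>A. if P (X i) then 1 else 0 :: real) \<in> borel_measurable (PiM {1..n} M)"
    if A: "A \<subseteq> {1..n}" and P: "Measurable.pred borel P" for A P
  proof (intro borel_measurable_sum)
    fix i assume "i \<in> A"
    then have [measurable]: "(\<lambda>X. X i) \<in> borel_measurable (PiM {1..n} M)"
      using component A by auto
    show "(\<lambda>X. if P (X i) then 1 else 0 :: real) \<in> borel_measurable (PiM {1..n} M)"
      using P by measurable
  qed
  have "(\<lambda>X. FDP F (rej n X t) + FNP F (rej n X t)) \<in> borel_measurable (PiM {1..n} M)" for t
  proof -
    have [measurable]: "Measurable.pred borel (\<lambda>x::real. t \<le> x)" "Measurable.pred borel (\<lambda>x::real. x < t)"
      by auto
    show ?thesis
      unfolding FDP_plus_FNP_rej_eq_sums[OF F] using F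
      by (intro borel_measurable_add borel_measurable_divide borel_measurable_const count) auto
  qed
  then show ?thesis
    unfolding oracle_loss_eq_INF_Rats[abs_def] by (rule borel_measurable_cINF_real[OF countable_rat])
qed

lemma oracle_loss_ge_if_nulls_dominate:
  assumes F: "F \<subseteq> {1..n}" "card F = m" "0 < m" and \<epsilon>: "0 < \<epsilon>" "\<epsilon> < 1"
    and signals: "real (card {i\<in>F. s \<le> X i}) \<le> \<epsilon> * m"
    and nulls: "(1 - \<epsilon>) / \<epsilon> * m \<le> real (card {i\<in>{1..n} - F. s \<le> X i})"
  shows "1 - \<epsilon> \<le> oracle_loss n F X"
  unfolding oracle_loss_def
proof (rule cINF_greatest)
  fix t
  define R where "R = rej n X t"
  define a where "a = card (R \<inter> F)"
  define b where "b = card (R - F)"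
  have fin: "finite R" "finite F"
    using F(1) finite_subset unfolding R_def rej_def by auto
  have "a \<le> m"
    unfolding a_def F(2)[symmetric] using fin by (intro card_mono) auto
  have FNP: "FNP F R = (real m - a) / m"
    unfolding FNP_def a_def F(2)[symmetric] using fin card_Int_Diff[of F R]
    by (simp add: Int_commute of_nat_diff card_mono)
  have FDP: "FDP F R = b / (a + b)"
    unfolding FDP_def a_def b_def using card_Int_Diff[OF fin(1), of F] by simp
  have nonneg: "0 \<le> FDP F R" "0 \<le> FNP F R"
    unfolding FDP_def FNP_def by simp_all
  show "1 - \<epsilon> \<le> FDP F (rej n X t) + FNP F (rej n X t)"
  proof (cases "a \<le> \<epsilon> * m")
    case True
    then have "1 - \<epsilon> \<le> FNP F R"
      unfolding FNP using F by (simp add: field_simps)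
    then show ?thesis
      using nonneg unfolding R_def by simp
  next
    case False
    text \<open>So many signals are rejected that \<open>t < s\<close>, and all nulls above \<open>s\<close> are rejected too.\<close>
    have "t < s"
    proof (rule ccontr)
      assume "\<not> t < s"
      then have "a \<le> card {i\<in>F. s \<le> X i}"
        unfolding a_def R_def rej_def using fin by (intro card_mono) auto
      with signals False show False by linarith
    qed
    then have "card {i\<in>{1..n} - F. s \<le> X i} \<le> b"
      unfolding b_def R_def rej_def using fin by (intro card_mono) (auto simp: R_def)
    then have "(1 - \<epsilon>) / \<epsilon> * m \<le> b"
      using nulls by linarith
    then have "(1 - \<epsilon>) * m \<le> \<epsilon> * b"
      using \<epsilon> by (simp add: field_simps)
    moreover have "(1 - \<epsilon>) * a \<le> (1 - \<epsilon>) * m"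
      using \<open>a \<le> m\<close> \<epsilon> by (intro mult_left_mono) auto
    ultimately have "(1 - \<epsilon>) * (a + b) \<le> b"
      by (simp add: algebra_simps)
    moreover have "0 < real a + real b"
      using False \<epsilon> F(3) mult_pos_pos[of \<epsilon> "real m"] by linarith
    ultimately have "1 - \<epsilon> \<le> FDP F R"
      unfolding FDP by (simp add: le_divide_eq)
    then show ?thesis
      using nonneg unfolding R_def by simp
  qed
qed simp

lemma oracle_loss_ge_or_counts_deviate:
  assumes F: "F \<subseteq> {1..n}" "card F = m" "0 < m" and \<epsilon>: "0 < \<epsilon>" "\<epsilon> < 1"
  shows "1 - \<epsilon> \<le> oracle_loss n F X \<or> \<epsilon> * m < (\<Sum>i\<in>F. indicator {s..} (X i))
    \<or> (\<Sum>i\<in>{1..n} - F. indicator {s..} (X i)) < (1 - \<epsilon>) / \<epsilon> * m"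
proof -
  have count: "real (card {i\<in>A. s \<le> X i}) = (\<Sum>i\<in>A. indicator {s..} (X i))" if "finite A" for A
    using that by (simp add: indicator_def sum.If_cases Int_def)
  have "real (card {i\<in>F. s \<le> X i}) = (\<Sum>i\<in>F. indicator {s..} (X i))"
    "real (card {i\<in>{1..n} - F. s \<le> X i}) = (\<Sum>i\<in>{1..n} - F. indicator {s..} (X i))"
    by (intro count finite_Diff finite_atLeastAtMost finite_subset[OF F(1)])+
  then show ?thesis
    using oracle_loss_ge_if_nulls_dominate[OF F \<epsilon>, where s=s and X=X] by linarith
qed

section \<open>Risk bound at a fixed sample size\<close>

lemma Markov_Chebyshev_minorant_le:
  fixes L S N a E \<epsilon> :: real
  assumes "0 \<le> L" "\<epsilon> < 1" "0 < a" "0 < E" "0 \<le> S"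
    and alternatives: "1 - \<epsilon> \<le> L \<or> a < S \<or> N < E / 2"
  shows "(1 - \<epsilon>) * (1 - S / a - (N - E)\<^sup>2 / (E / 2)\<^sup>2) \<le> L"
proof -
  define Q where "Q = 1 - S / a - (N - E)\<^sup>2 / (E / 2)\<^sup>2"
  have "0 \<le> S / a" "0 \<le> (N - E)\<^sup>2 / (E / 2)\<^sup>2"
    using assms by simp_all
  then have "Q \<le> 1"
    unfolding Q_def by linarith
  have "Q < 0" if "a < S \<or> N < E / 2"
    using that
  proof
    assume "a < S"
    then have "1 < S / a"
      using assms by simp
    then show ?thesis
      unfolding Q_def by (smt (verit) divide_nonneg_nonneg zero_le_power2)
  next
    assume "N < E / 2"
    then have "(E / 2)\<^sup>2 < (E - N)\<^sup>2"
      using assms by (intro power_strict_mono) auto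
    then have "(E / 2)\<^sup>2 < (N - E)\<^sup>2"
      by (simp add: power2_commute)
    then have "1 < (N - E)\<^sup>2 / (E / 2)\<^sup>2"
      using assms by simp
    then show ?thesis
      unfolding Q_def using assms by (smt (verit) divide_nonneg_nonneg)
  qed
  then show ?thesis
    using alternatives \<open>Q \<le> 1\<close> assms(1,2) unfolding Q_def[symmetric]
    by (smt (verit) mult_left_le mult_pos_neg)
qed

text \<open>Markov's and Chebyshev's inequalities in integrated form: the minorant of \<open>L\<close> avoids any
  reasoning about the underlying events.\<close>

lemma (in prob_space) expectation_ge_Markov_Chebyshev:
  fixes L S N :: "'a \<Rightarrow> real"
  assumes int: "integrable M L" "integrable M S" "integrable M (\<lambda>x. (N x - E)\<^sup>2)"
    and "\<epsilon> < 1" "0 < a" "0 < E" and nonneg: "\<And>x. 0 \<le> L x" "\<And>x. 0 \<le> S x"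
    and alternatives: "\<And>x. 1 - \<epsilon> \<le> L x \<or> a < S x \<or> N x < E / 2"
  shows "(1 - \<epsilon>) * (1 - expectation S / a - expectation (\<lambda>x. (N x - E)\<^sup>2) / (E / 2)\<^sup>2) \<le> expectation L"
proof -
  have int_Markov: "integrable M (\<lambda>x. 1 - S x / a)"
    using int(2) by (intro Bochner_Integration.integrable_diff integrable_const) auto
  have "expectation (\<lambda>x. 1 - S x / a) = 1 - expectation S / a"
    using Bochner_Integration.integral_diff[OF integrable_const[of 1] integrable_divide_zero[OF int(2), of a]]
      prob_space by simp
  then have "(1 - \<epsilon>) * (1 - expectation S / a - expectation (\<lambda>x. (N x - E)\<^sup>2) / (E / 2)\<^sup>2)
      = expectation (\<lambda>x. (1 - \<epsilon>) * (1 - S x / a - (N x - E)\<^sup>2 / (E / 2)\<^sup>2))"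
    using int_Markov int(2,3) by simp
  also have "\<dots> \<le> expectation L"
  proof (rule integral_mono[OF _ int(1)])
    show "integrable M (\<lambda>x. (1 - \<epsilon>) * (1 - S x / a - (N x - E)\<^sup>2 / (E / 2)\<^sup>2))"
      by (intro Bochner_Integration.integrable_mult_right Bochner_Integration.integrable_diff[OF int_Markov]
          integrable_divide_zero int(3))
    show "(1 - \<epsilon>) * (1 - S x / a - (N x - E)\<^sup>2 / (E / 2)\<^sup>2) \<le> L x" for x
      using assms by (intro Markov_Chebyshev_minorant_le) auto
  qed
  finally show ?thesis .
qed

lemma measure_distr_plus_atLeast:
  fixes D :: "real measure"
  assumes "sets D = sets borel"
  shows "measure (distr D borel (\<lambda>z. z + d)) {s..} = measure D {s - d..}"
proof -
  have "(\<lambda>z. z + d) \<in> measurable D borel"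
    using assms by (simp add: measurable_cong_sets[OF assms refl])
  moreover have "(\<lambda>z. z + d) -` {s..} \<inter> space D = {s - d..}"
    using sets_eq_imp_space_eq[OF assms] by auto
  ultimately show ?thesis
    by (simp add: measure_distr)
qed

lemma null_mass_bounds:
  fixes \<epsilon> E :: real and m :: nat
  assumes "0 < \<epsilon>" "\<epsilon> < 1" "0 < m" and "(2 * (1 - \<epsilon>) + 4) / \<epsilon> * m \<le> E"
  shows "(1 - \<epsilon>) / \<epsilon> * m \<le> E / 2" "0 < E" "4 / E \<le> \<epsilon>"
proof -
  have split: "(2 * (1 - \<epsilon>) + 4) / \<epsilon> * m = 2 * ((1 - \<epsilon>) / \<epsilon> * m) + 4 / \<epsilon> * m"
    using assms by (simp add: field_simps)
  moreover have "0 \<le> (1 - \<epsilon>) / \<epsilon> * m" "0 < 4 / \<epsilon>" "4 / \<epsilon> \<le> 4 / \<epsilon> * m"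
    using assms mult_left_mono[of 1 "real m" "4 / \<epsilon>"] by auto
  ultimately show "(1 - \<epsilon>) / \<epsilon> * m \<le> E / 2"
    using assms(4) by linarith
  from split \<open>0 < 4 / \<epsilon>\<close> \<open>4 / \<epsilon> \<le> 4 / \<epsilon> * m\<close> \<open>0 \<le> (1 - \<epsilon>) / \<epsilon> * m\<close>
  have "4 / \<epsilon> \<le> E"
    using assms(4) by linarith
  with \<open>0 < 4 / \<epsilon>\<close> show "0 < E"
    by linarith
  from \<open>4 / \<epsilon> \<le> E\<close> have "4 \<le> E * \<epsilon>"
    using assms by (simp add: divide_le_eq)
  with \<open>0 < E\<close> show "4 / E \<le> \<epsilon>"
    by (simp add: divide_le_eq mult.commute)
qed

lemma integral_oracle_loss_ge:
  fixes D :: "real measure"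
  assumes D: "prob_space D" "sets D = sets borel"
    and F: "F \<subseteq> {1..n}" "card F = m" "0 < m"
    and \<epsilon>: "0 < \<epsilon>" "\<epsilon> < 1"
    and signal_tail: "measure D {c..} \<le> \<epsilon>\<^sup>2"
    and null_mass: "(2 * (1 - \<epsilon>) + 4) / \<epsilon> * m \<le> real (n - m) * measure D {\<mu> + c..}"
  shows "(1 - \<epsilon>) * (1 - 2 * \<epsilon>) \<le>
    (\<integral>X. oracle_loss n F X \<partial>PiM {1..n} (\<lambda>i. distr D borel (\<lambda>z. z + (if i \<in> F then \<mu> else 0))))"
proof -
  define M where "M i = distr D borel (\<lambda>z. z + (if i \<in> F then \<mu> else 0))" for i
  define s where "s = \<mu> + c"
  define E where "E = real (n - m) * measure D {s..}"
  define S where "S X = (\<Sum>i\<in>F. indicator {s..} (X i) :: real)" for X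
  define N where "N X = (\<Sum>i\<in>{1..n} - F. indicator {s..} (X i) :: real)" for X
  have sets_M: "sets (M i) = sets borel" for i
    unfolding M_def by simp
  have "(\<lambda>z. z + d) \<in> measurable D borel" for d :: real
    by (subst measurable_cong_sets[OF D(2) refl]) simp
  then have prob: "prob_space (M i)" for i
    unfolding M_def by (rule prob_space.prob_space_distr[OF D(1)])
  interpret product_prob_space M "{1..n}"
    using prob by (rule product_prob_spaceI)
  have measure_M: "measure (M i) {s..} = (if i \<in> F then measure D {c..} else measure D {s..})" for i
    unfolding M_def s_def using measure_distr_plus_atLeast[OF D(2)] by simp
  have m_small: "(1 - \<epsilon>) / \<epsilon> * m \<le> E / 2" and E_pos: "0 < E" and E_large: "4 / E \<le> \<epsilon>"
    using null_mass_bounds[OF \<epsilon> F(3)] null_mass unfolding E_def s_def by auto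
  have card_nulls: "card ({1..n} - F) = n - m"
    using F by (simp add: card_Diff_subset finite_subset)
  have mean_S: "(\<integral>X. S X \<partial>PiM {1..n} M) = m * measure D {c..}"
    unfolding S_def using integral_PiM_count[OF prob _ F(1), of "{s..}"] F measure_M sets_M by simp
  have "(\<Sum>i\<in>{1..n} - F. measure (M i) {s..}) = E"
    unfolding E_def using measure_M card_nulls by simp
  then have var_N: "(\<integral>X. (N X - E)\<^sup>2 \<partial>PiM {1..n} M) \<le> E"
    unfolding N_def
    using integral_PiM_count_variance_le[where M=M and I="{1..n}" and J="{1..n} - F" and A="{s..}", OF prob]
    by (simp add: sets_M)
  have alternatives: "1 - \<epsilon> \<le> oracle_loss n F X \<or> \<epsilon> * m < S X \<or> N X < E / 2" for X
    using oracle_loss_ge_or_counts_deviate[OF F \<epsilon>, where s=s and X=X] m_small unfolding S_def N_def by linarith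
  have int_S: "integrable (PiM {1..n} M) S"
    unfolding S_def using integrable_PiM_count[where M=M and I="{1..n}" and J=F and A="{s..}", OF prob] F(1)
    by (simp add: sets_M)
  have int_N: "integrable (PiM {1..n} M) (\<lambda>X. (N X - E)\<^sup>2)"
    unfolding N_def
    using integrable_PiM_count_centered_sq[where M=M and I="{1..n}" and J="{1..n} - F" and A="{s..}", OF prob]
    by (simp add: sets_M)
  have int_loss: "integrable (PiM {1..n} M) (oracle_loss n F)"
    using borel_measurable_oracle_loss[OF sets_M F(1)] oracle_loss_nonneg oracle_loss_le_2
    by (intro P.integrable_const_bound[where B=2]) auto
  have "measure D {c..} / \<epsilon> \<le> \<epsilon>"
    using signal_tail \<epsilon> by (simp add: divide_le_eq power2_eq_square)
  moreover have "E / (E / 2)\<^sup>2 = 4 / E"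
    using E_pos by (simp add: power2_eq_square)
  ultimately have "(1 - \<epsilon>) * (1 - 2 * \<epsilon>) \<le> (1 - \<epsilon>) * (1 - measure D {c..} / \<epsilon> - E / (E / 2)\<^sup>2)"
    using E_large \<epsilon> by (intro mult_left_mono) auto
  also have "\<dots> \<le> (1 - \<epsilon>) * (1 - (\<integral>X. S X \<partial>PiM {1..n} M) / (\<epsilon> * m) - (\<integral>X. (N X - E)\<^sup>2 \<partial>PiM {1..n} M) / (E / 2)\<^sup>2)"
    using var_N \<epsilon> F(3) unfolding mean_S by (intro mult_left_mono) (auto intro: divide_right_mono)
  also have "\<dots> \<le> (\<integral>X. oracle_loss n F X \<partial>PiM {1..n} M)"
    using \<epsilon> F(3) E_pos alternatives
    by (intro P.expectation_ge_Markov_Chebyshev int_loss int_S int_N) (auto simp: oracle_loss_nonneg S_def sum_nonneg)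
  finally show ?thesis
    unfolding M_def .
qed

lemma oracle_risk_ge:
  fixes D :: "real measure"
  assumes D: "prob_space D" "sets D = sets borel"
    and \<epsilon>: "0 < \<epsilon>" "\<epsilon> < 1" and signal_tail: "measure D {c..} \<le> \<epsilon>\<^sup>2"
    and m: "m = nat \<lfloor>real n powr (1 - \<beta>)\<rfloor>" "0 < m" "m \<le> n"
    and \<mu>: "\<mu> = (\<gamma> * r * ln (real n)) powr (1 / \<gamma>)"
    and null_mass: "(2 * (1 - \<epsilon>) + 4) / \<epsilon> * m \<le> real (n - m) * measure D {\<mu> + c..}"
  shows "(1 - \<epsilon>) * (1 - 2 * \<epsilon>) \<le> oracle_risk D \<gamma> \<beta> r n"
proof -
  define S where "S = {F. F \<subseteq> {1..n} \<and> card F = m}"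
  have "card S = n choose m"
    unfolding S_def using n_subsets[of "{1..n}" m] by simp
  then have "0 < card S"
    using m by simp
  moreover have "(1 - \<epsilon>) * (1 - 2 * \<epsilon>) \<le> (\<integral>X. oracle_loss n F X
      \<partial>PiM {1..n} (\<lambda>i. distr D borel (\<lambda>z. z + (if i \<in> F then \<mu> else 0))))" if "F \<in> S" for F
    using that m(2) unfolding S_def by (intro integral_oracle_loss_ge[OF D _ _ _ \<epsilon> signal_tail null_mass]) auto
  ultimately have "(1 - \<epsilon>) * (1 - 2 * \<epsilon>) \<le> (\<Sum>F\<in>S. \<integral>X. oracle_loss n F X
      \<partial>PiM {1..n} (\<lambda>i. distr D borel (\<lambda>z. z + (if i \<in> F then \<mu> else 0)))) / card S"
    using sum_mono[of S "\<lambda>_. (1 - \<epsilon>) * (1 - 2 * \<epsilon>)"] by (simp add: le_divide_eq mult.commute)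
  then show ?thesis
    unfolding oracle_risk_def Let_def m(1)[symmetric] \<mu>[symmetric] S_def[symmetric] .
qed

section \<open>Asymptotics\<close>

lemma survival_tendsto_zero:
  fixes D :: "real measure"
  assumes "prob_space D" "sets D = sets borel"
  shows "((\<lambda>c. measure D {c..}) \<longlongrightarrow> 0) at_top"
proof (rule tendsto_sandwich[where f="\<lambda>_. 0" and h="\<lambda>c. 1 - cdf D (c - 1)"])
  interpret real_distribution D
    using assms by (simp add: real_distribution_def real_distribution_axioms_def)
  show "eventually (\<lambda>c. measure D {c..} \<le> 1 - cdf D (c - 1)) at_top"
  proof (intro always_eventually allI)
    fix c :: real
    have "measure D {c..} + cdf D (c - 1) = measure D ({c..} \<union> {..c - 1})"
      unfolding cdf_def by (subst finite_measure_Union) auto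
    also have "\<dots> \<le> 1"
      by (rule prob_le_1)
    finally show "measure D {c..} \<le> 1 - cdf D (c - 1)"
      by simp
  qed
  have "filterlim (\<lambda>c::real. c - 1) at_top at_top"
    by real_asymp
  then have "((\<lambda>c. 1 - cdf D (c - 1)) \<longlongrightarrow> 1 - 1) at_top"
    by (intro tendsto_diff tendsto_const filterlim_compose[OF cdf_lim_at_top_prob])
  then show "((\<lambda>c. 1 - cdf D (c - 1)) \<longlongrightarrow> 0) at_top"
    by simp
qed (auto simp: tendsto_const)

text \<open>Since \<open>ln 0 = 0\<close>, the negative limit also forces \<open>\<Psi>\<close> to be eventually positive.\<close>

lemma AGG_right_eventually_positive:
  assumes "AGG_right \<Psi> \<gamma>" "\<And>x. 0 \<le> \<Psi> x"
  shows "eventually (\<lambda>x. 0 < \<Psi> x) at_top"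
proof -
  have "eventually (\<lambda>x. x powr (-\<gamma>) * ln (\<Psi> x) < 0) at_top"
    using assms(1) unfolding AGG_right_def by (auto intro: order_tendstoD(2))
  then show ?thesis
    by eventually_elim (use assms(2) in \<open>metis less_eq_real_def ln_0 mult_zero_right less_irrefl\<close>)
qed

lemma AGG_right_shifted_level_ge:
  fixes \<Psi> :: "real \<Rightarrow> real"
  assumes AGG: "AGG_right \<Psi> \<gamma>" and nonneg: "\<And>x. 0 \<le> \<Psi> x" and "0 < r" "r < \<rho>"
  shows "eventually (\<lambda>n. real n powr (-\<rho>) \<le> \<Psi> ((\<gamma> * r * ln (real n)) powr (1 / \<gamma>) + c)) sequentially"
proof -
  define x where "x n = (\<gamma> * r * ln (real n)) powr (1 / \<gamma>) + c" for n :: nat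
  have \<gamma>: "0 < \<gamma>" and lim: "((\<lambda>x. x powr (-\<gamma>) * ln (\<Psi> x)) \<longlongrightarrow> - 1 / \<gamma>) at_top"
    using AGG by (auto simp: AGG_right_def)
  have x_top: "filterlim x at_top sequentially"
    unfolding x_def using \<gamma> \<open>0 < r\<close> by real_asymp
  have "((\<lambda>n. x n powr (-\<gamma>) * ln (\<Psi> (x n)) * (x n powr \<gamma> / ln (real n))) \<longlongrightarrow> - 1 / \<gamma> * (\<gamma> * r)) sequentially"
  proof (rule tendsto_mult)
    show "((\<lambda>n. x n powr (-\<gamma>) * ln (\<Psi> (x n))) \<longlongrightarrow> - 1 / \<gamma>) sequentially"
      using filterlim_compose[OF lim x_top] .
    show "((\<lambda>n. x n powr \<gamma> / ln (real n)) \<longlongrightarrow> \<gamma> * r) sequentially"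
      unfolding x_def using \<gamma> \<open>0 < r\<close> by (real_asymp simp: powr_powr)
  qed
  then have "((\<lambda>n. x n powr (-\<gamma>) * ln (\<Psi> (x n)) * (x n powr \<gamma> / ln (real n))) \<longlongrightarrow> - r) sequentially"
    using \<gamma> by simp
  then have "eventually (\<lambda>n. - \<rho> < x n powr (-\<gamma>) * ln (\<Psi> (x n)) * (x n powr \<gamma> / ln (real n))) sequentially"
    using \<open>r < \<rho>\<close> by (auto intro: order_tendstoD(1))
  moreover have "eventually (\<lambda>n. 0 < \<Psi> (x n)) sequentially"
    using filterlim_iff[THEN iffD1, OF x_top] AGG_right_eventually_positive[OF AGG nonneg] by blast
  moreover have "eventually (\<lambda>n. 0 < x n) sequentially"
    using x_top by (simp add: filterlim_at_top_dense)
  moreover have "eventually (\<lambda>n. 1 < real n) sequentially"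
    by real_asymp
  ultimately show ?thesis
  proof eventually_elim
    case (elim n)
    then have "- \<rho> * ln (real n) < ln (\<Psi> (x n))"
      by (simp add: powr_minus field_simps)
    then have "exp (- \<rho> * ln (real n)) < \<Psi> (x n)"
      using elim by (metis exp_less_cancel_iff exp_ln)
    then show ?case
      using elim by (simp add: powr_def x_def)
  qed
qed

lemma eventually_sparse_count_bounds:
  assumes "0 < \<beta>" "\<beta> < 1"
  shows "eventually (\<lambda>n. 0 < nat \<lfloor>real n powr (1 - \<beta>)\<rfloor> \<and> 2 * real (nat \<lfloor>real n powr (1 - \<beta>)\<rfloor>) \<le> real n) sequentially"
proof -
  have "eventually (\<lambda>n. 1 \<le> real n powr (1 - \<beta>)) sequentially"
    "eventually (\<lambda>n. 2 * real n powr (1 - \<beta>) \<le> real n) sequentially"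
    using assms by real_asymp+
  then show ?thesis
  proof eventually_elim
    case (elim n)
    have "real (nat \<lfloor>real n powr (1 - \<beta>)\<rfloor>) \<le> real n powr (1 - \<beta>)"
      by (rule of_nat_floor) simp
    then have "2 * real (nat \<lfloor>real n powr (1 - \<beta>)\<rfloor>) \<le> real n"
      using elim by linarith
    moreover have "0 < nat \<lfloor>real n powr (1 - \<beta>)\<rfloor>"
      using elim by simp
    ultimately show ?case
      by blast
  qed
qed

lemma eventually_null_mass_dominates:
  fixes p :: "nat \<Rightarrow> real" and L :: real
  assumes \<beta>: "0 < \<beta>" "\<beta> < 1" and "\<rho> < \<beta>" "0 \<le> L"
    and p: "eventually (\<lambda>n. real n powr (-\<rho>) \<le> p n) sequentially"
  shows "eventually (\<lambda>n. L * real (nat \<lfloor>real n powr (1 - \<beta>)\<rfloor>)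
    \<le> real (n - nat \<lfloor>real n powr (1 - \<beta>)\<rfloor>) * p n) sequentially"
proof -
  have "eventually (\<lambda>n. L * real n powr (1 - \<beta>) \<le> real n powr (1 - \<rho>) / 2) sequentially"
    using \<open>\<rho> < \<beta>\<close> by real_asymp
  moreover have "eventually (\<lambda>n. 0 < real n) sequentially"
    by real_asymp
  ultimately show ?thesis
    using p eventually_sparse_count_bounds[OF \<beta>]
  proof eventually_elim
    case (elim n)
    define m where "m = nat \<lfloor>real n powr (1 - \<beta>)\<rfloor>"
    have "real m \<le> real n powr (1 - \<beta>)"
      unfolding m_def by (rule of_nat_floor) simp
    then have "L * m \<le> L * real n powr (1 - \<beta>)"
      using \<open>0 \<le> L\<close> by (rule mult_left_mono)
    also have "\<dots> \<le> real n powr (1 - \<rho>) / 2"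
      using elim by simp
    also have "\<dots> = real n / 2 * real n powr (-\<rho>)"
      using powr_add[of "real n" 1 "-\<rho>"] by simp
    also have "\<dots> \<le> real (n - m) * p n"
      using elim unfolding m_def by (intro mult_mono) (auto simp: of_nat_diff)
    finally show ?case
      unfolding m_def .
  qed
qed

lemma ereal_le_Liminf_if_eventually_ge:
  fixes f :: "'a \<Rightarrow> real"
  assumes "\<And>\<epsilon>. 0 < \<epsilon> \<Longrightarrow> \<epsilon> < 1 \<Longrightarrow> eventually (\<lambda>n. c - \<epsilon> \<le> f n) F"
  shows "ereal c \<le> Liminf F (\<lambda>n. ereal (f n))"
  unfolding le_Liminf_iff
proof (intro allI impI)
  fix y assume "y < ereal c"
  then obtain \<epsilon> where \<epsilon>: "0 < \<epsilon>" "\<epsilon> < 1" "y < ereal (c - \<epsilon>)"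
  proof (cases y)
    case (real y')
    with \<open>y < ereal c\<close> show ?thesis
      by (intro that[of "min (1/2) ((c - y') / 2)"]) (auto simp: min_def field_simps)
  qed (use that[of "1/2"] \<open>y < ereal c\<close> in auto)
  show "eventually (\<lambda>n. y < ereal (f n)) F"
    using assms[OF \<epsilon>(1,2)] by eventually_elim (use \<epsilon>(3) in \<open>auto intro: less_le_trans\<close>)
qed


lemma oracle_risk_eventually_ge:
  fixes D :: "real measure"
  assumes D: "prob_space D" "sets D = sets borel" and AGG: "AGG_right (survival_of D) \<gamma>"
    and \<beta>: "0 < \<beta>" "\<beta> < 1" and r: "0 < r" "r < \<beta>" and \<epsilon>: "0 < \<epsilon>" "\<epsilon> < 1"
  shows "eventually (\<lambda>n. (1 - \<epsilon>) * (1 - 2 * \<epsilon>) \<le> oracle_risk D \<gamma> \<beta> r n) sequentially"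
proof -
  obtain c where c: "measure D {c..} \<le> \<epsilon>\<^sup>2"
    using order_tendstoD(2)[OF survival_tendsto_zero[OF D], of "\<epsilon>\<^sup>2"] \<epsilon>
    by (auto simp: eventually_at_top_linorder intro: less_imp_le)
  have "eventually (\<lambda>n. real n powr (- ((r + \<beta>) / 2))
      \<le> survival_of D ((\<gamma> * r * ln (real n)) powr (1 / \<gamma>) + c)) sequentially"
    using r by (intro AGG_right_shifted_level_ge[OF AGG]) (auto simp: survival_of_def)
  then have "eventually (\<lambda>n. (2 * (1 - \<epsilon>) + 4) / \<epsilon> * real (nat \<lfloor>real n powr (1 - \<beta>)\<rfloor>)
      \<le> real (n - nat \<lfloor>real n powr (1 - \<beta>)\<rfloor>) * survival_of D ((\<gamma> * r * ln (real n)) powr (1 / \<gamma>) + c))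
      sequentially"
    using \<beta> r \<epsilon> by (intro eventually_null_mass_dominates) auto
  with eventually_sparse_count_bounds[OF \<beta>] show ?thesis
    by eventually_elim (intro oracle_risk_ge[OF D \<epsilon> c refl _ _ refl]; auto simp: survival_of_def)
qed

theorem theorem1:
  fixes D :: "real measure" and \<Psi> :: "real \<Rightarrow> real" and \<gamma> \<beta> r :: real
  assumes "prob_space D" and "sets D = sets borel"
    and "\<Psi> = survival_of D"
    and "continuous_on UNIV \<Psi>"
    and "AGG_right \<Psi> \<gamma>"
    and "\<gamma> \<ge> 1" and "0 < \<beta>" and "\<beta> < 1" and "0 < r" and "r < \<beta>"
  shows "liminf (\<lambda>n. ereal (oracle_risk D \<gamma> \<beta> r n)) \<ge> 1"
  unfolding one_ereal_def
proof (rule ereal_le_Liminf_if_eventually_ge)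
  fix \<epsilon> :: real assume "0 < \<epsilon>" "\<epsilon> < 1"
  then have "eventually (\<lambda>n. (1 - \<epsilon> / 3) * (1 - 2 * (\<epsilon> / 3)) \<le> oracle_risk D \<gamma> \<beta> r n) sequentially"
    using assms by (intro oracle_risk_eventually_ge) auto
  moreover have "1 - \<epsilon> \<le> (1 - \<epsilon> / 3) * (1 - 2 * (\<epsilon> / 3))"
    using zero_le_power2[of \<epsilon>] by (simp add: algebra_simps power2_eq_square)
  ultimately show "eventually (\<lambda>n. 1 - \<epsilon> \<le> oracle_risk D \<gamma> \<beta> r n) sequentially"
    by (auto elim: eventually_mono)
qed

end
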